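(* Let $(z_k)_{k\in\mathbb{N}}$ and $(z'_k)_{k\in\mathbb{N}}$ be sequences of pairwise distinct complex numbers with $\lim_{k\to\infty}|z_k|=\infty=\lim_{k\to\infty}|z'_k|$, and let $f,g$ be entire functions whose zeros are exactly the $z_k$ (respectively the $z'_k$), all simple. Let $S(f)=\{(z,w)\in\mathbb{C}^2: w^2=f(z)\}$, $S(g)=\{(z,w)\in\mathbb{C}^2: w^2=g(z)\}$, and let $G_f=\langle\varphi_f\rangle$, $G_g=\langle\varphi_g\rangle$ where $\varphi_f(z,w)=(z,-w)$ on $S(f)$ and $\varphi_g(z,w)=(z,-w)$ on $S(g)$. Then the pairs $(S(f),G_f)$ and $(S(g),G_g)$ are biholomorphically equivalent if and only if there exists a holomorphic automorphism of $\mathbb{C}$ carrying the set of zeros of $f$ onto the set of zeros of $g$.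
   Context: The pairs $(S(f),G_f)$ and $(S(g),G_g)$ are biholomorphically equivalent if there is a biholomorphism $\Phi:S(f)\to S(g)$ with $\Phi G_f\Phi^{-1}=G_g$. $S(f)$ and $S(g)$ are Riemann surfaces (infinite hyperelliptic curves), and the projection $(z,w)\mapsto z$ is a branched double cover onto $\mathbb{C}$ with deck group $G_f$ (resp. $G_g$). *)

theory Defs
  imports "HOL-Complex_Analysis.Complex_Analysis" "HOL-Library.FuncSet"
begin

definition hsurf :: "(complex \<Rightarrow> complex) \<Rightarrow> (complex \<times> complex) set" where
  "hsurf f = {(z, w). w ^ 2 = f z}"

definition deck_group :: "(complex \<Rightarrow> complex) \<Rightarrow> ((complex \<times> complex) \<Rightarrow> (complex \<times> complex)) set" where
  "deck_group f = {restrict id (hsurf f), restrict (\<lambda>(z, w). (z, - w)) (hsurf f)}"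

definition local_chart :: "(complex \<times> complex) set \<Rightarrow> complex \<times> complex \<Rightarrow> complex set
    \<Rightarrow> (complex \<Rightarrow> complex \<times> complex) \<Rightarrow> bool" where
  "local_chart S p V \<gamma> \<longleftrightarrow>
     open V \<and>
     (\<lambda>t. fst (\<gamma> t)) holomorphic_on V \<and> (\<lambda>t. snd (\<gamma> t)) holomorphic_on V \<and>
     (\<forall>t\<in>V. deriv (\<lambda>s. fst (\<gamma> s)) t \<noteq> 0 \<or> deriv (\<lambda>s. snd (\<gamma> s)) t \<noteq> 0) \<and>
     inj_on \<gamma> V \<and>
     continuous_on (\<gamma> ` V) (the_inv_into V \<gamma>) \<and>
     (\<exists>W. open W \<and> p \<in> W \<and> \<gamma> ` V = S \<inter> W)"

definition holo_map :: "(complex \<times> complex) set \<Rightarrow> ((complex \<times> complex) \<Rightarrow> (complex \<times> complex)) \<Rightarrow> bool" where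
  "holo_map S \<Phi> \<longleftrightarrow>
     (\<forall>p\<in>S. \<exists>V \<gamma>. local_chart S p V \<gamma> \<and>
        (\<lambda>t. fst (\<Phi> (\<gamma> t))) holomorphic_on V \<and> (\<lambda>t. snd (\<Phi> (\<gamma> t))) holomorphic_on V)"

definition biholomorphism :: "(complex \<times> complex) set \<Rightarrow> (complex \<times> complex) set
    \<Rightarrow> ((complex \<times> complex) \<Rightarrow> (complex \<times> complex)) \<Rightarrow> bool" where
  "biholomorphism S T \<Phi> \<longleftrightarrow>
     bij_betw \<Phi> S T \<and> holo_map S \<Phi> \<and> holo_map T (the_inv_into S \<Phi>)"

definition biholo_equiv_pairs :: "(complex \<Rightarrow> complex) \<Rightarrow> (complex \<Rightarrow> complex) \<Rightarrow> bool" where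
  "biholo_equiv_pairs f g \<longleftrightarrow>
     (\<exists>\<Phi>. biholomorphism (hsurf f) (hsurf g) \<Phi> \<and>
        {restrict (\<Phi> \<circ> h \<circ> the_inv_into (hsurf f) \<Phi>) (hsurf g) | h. h \<in> deck_group f}
          = deck_group g)"

end

(*
  An equivalence \<Phi> of (S(f), G_f) with (S(g), G_g) conjugates the sheet interchange
  (z, w) \<mapsto> (z, -w) of S(f) to that of S(g), which is not the identity because g is not
  identically zero. So \<Phi> maps fibres of the projection to fibres and induces a bijection \<psi>
  of C with fst \<circ> \<Phi> = \<psi> \<circ> fst. In the charts of S(f) away from the branch points the
  projection is locally invertible, so \<psi> is holomorphic there; the branch points lie over
  the isolated zeros of f, where \<psi> is continuous, hence holomorphic. Since \<Phi> maps fixed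
  points of the interchange to fixed points, \<psi> carries the zeros of f onto those of g.
  Conversely, if h is an automorphism of C with h (Z(f)) = Z(g), then (g \<circ> h) / f is entire
  and zero-free because all zeros are simple, so it has a holomorphic square root r, and
  (z, w) \<mapsto> (h z, r z * w) is an equivariant biholomorphism S(f) \<rightarrow> S(g).
*)
theory Submission
  imports Defs
begin

lemma simple_zero_isolated:
  fixes f :: "complex \<Rightarrow> complex"
  assumes "f holomorphic_on UNIV" and "f z = 0" and "deriv f z \<noteq> 0"
  obtains r where "r > 0" and "\<And>y. y \<in> ball z r \<Longrightarrow> y \<noteq> z \<Longrightarrow> f y \<noteq> 0"
proof -
  obtain r where "r > 0" and inj: "inj_on f (ball z r)"
    using has_complex_derivative_locally_injective[OF assms(1) UNIV_I open_UNIV assms(3)] by blast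
  have "f y \<noteq> 0" if "y \<in> ball z r" "y \<noteq> z" for y
    using inj_onD[OF inj, of y z] that assms(2) \<open>r > 0\<close> by auto
  with \<open>r > 0\<close> show ?thesis
    using that by blast
qed

lemma holomorphic_on_inv_of_bij:
  fixes h :: "complex \<Rightarrow> complex"
  assumes "h holomorphic_on UNIV" and "bij h"
  shows "inv h holomorphic_on UNIV"
proof -
  obtain k where "k holomorphic_on range h" and k: "\<And>z. k (h z) = z"
    by (rule holomorphic_has_inverse[OF assms(1) open_UNIV bij_is_inj[OF assms(2)]]) blast
  moreover have "k = inv h"
    using k bij_is_surj[OF assms(2)] by (metis surj_f_inv_f ext)
  ultimately show ?thesis
    using bij_is_surj[OF assms(2)] by simp
qed

lemma deriv_nonzero_if_holomorphic_inv:
  fixes h :: "complex \<Rightarrow> complex"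
  assumes "h holomorphic_on UNIV" and "inv h holomorphic_on UNIV" and "inj h"
  shows "deriv h z \<noteq> 0"
proof -
  have "((\<lambda>x. inv h (h x)) has_field_derivative deriv (inv h) (h z) * deriv h z) (at z)"
    using holomorphic_derivI[OF assms(2) open_UNIV UNIV_I] holomorphic_derivI[OF assms(1) open_UNIV UNIV_I]
    by (rule DERIV_chain2)
  then have "((\<lambda>x. x) has_field_derivative deriv (inv h) (h z) * deriv h z) (at z)"
    by (simp add: inv_f_f[OF assms(3)])
  then have "deriv (inv h) (h z) * deriv h z = 1"
    using DERIV_ident DERIV_unique by blast
  then show ?thesis
    by auto
qed

lemma tendsto_quotient_at_common_zero:
  fixes f G :: "complex \<Rightarrow> complex"
  assumes "(f has_field_derivative f') (at z)" and "(G has_field_derivative G') (at z)"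
    and "f z = 0" and "G z = 0" and "f' \<noteq> 0"
  shows "((\<lambda>y. G y / f y) \<longlongrightarrow> G' / f') (at z)"
proof -
  have "((\<lambda>y. ((G y - G z) / (y - z)) / ((f y - f z) / (y - z))) \<longlongrightarrow> G' / f') (at z)"
    using assms(1,2,5) unfolding has_field_derivative_iff by (intro tendsto_divide)
  \<comment> \<open>This holds also where f y = 0, as both sides are then 0 (division by zero).\<close>
  moreover have "\<forall>\<^sub>F y in at z. ((G y - G z) / (y - z)) / ((f y - f z) / (y - z)) = G y / f y"
    using assms(3,4) by (auto simp: eventually_at_filter)
  ultimately show ?thesis
    by (rule Lim_transform_eventually)
qed

lemma holomorphic_quotient_simple_zeros:
  fixes f G :: "complex \<Rightarrow> complex"
  assumes holf: "f holomorphic_on UNIV" and holG: "G holomorphic_on UNIV"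
    and simple: "\<And>z. f z = 0 \<Longrightarrow> deriv f z \<noteq> 0" and G0: "\<And>z. f z = 0 \<Longrightarrow> G z = 0"
  obtains q where "q holomorphic_on UNIV" and "\<And>z. G z = f z * q z"
proof
  define q where "q z = (if f z = 0 then deriv G z / deriv f z else G z / f z)" for z
  show "G z = f z * q z" for z
    using G0 by (simp add: q_def)
  have "open {z. f z \<noteq> 0}"
    using holf by (intro open_Collect_neq continuous_intros holomorphic_on_imp_continuous_on) auto
  have "(\<lambda>z. G z / f z) holomorphic_on {z. f z \<noteq> 0}"
    using holf holG by (intro holomorphic_intros) (auto intro: holomorphic_on_subset)
  then have hol_off: "q holomorphic_on {z. f z \<noteq> 0}"
    by (rule holomorphic_transform) (simp add: q_def)
  have "q analytic_on {z}" for z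
  proof (cases "f z = 0")
    case False
    then show ?thesis
      using \<open>open {z. f z \<noteq> 0}\<close> hol_off analytic_at by blast
  next
    case True
    obtain r where "r > 0" and nonzero: "\<And>y. y \<in> ball z r \<Longrightarrow> y \<noteq> z \<Longrightarrow> f y \<noteq> 0"
      using simple_zero_isolated[OF holf True simple[OF True]] by blast
    have "((\<lambda>y. G y / f y) \<longlongrightarrow> deriv G z / deriv f z) (at z)"
      using holomorphic_derivI[OF holf open_UNIV UNIV_I] holomorphic_derivI[OF holG open_UNIV UNIV_I]
        True G0[OF True] simple[OF True]
      by (rule tendsto_quotient_at_common_zero)
    then have "(q \<longlongrightarrow> deriv G z / deriv f z) (at z)"
      by (rule Lim_transform_within_open[OF _ open_ball[of z r]])
        (use \<open>r > 0\<close> nonzero in \<open>auto simp: q_def\<close>)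
    then have lim: "(q \<longlongrightarrow> q z) (at z within ball z r)"
      using True by (auto simp: q_def intro: tendsto_within_subset)
    have "q holomorphic_on ball z r - {z}"
      by (rule holomorphic_on_subset[OF hol_off]) (use nonzero in blast)
    then have "q holomorphic_on ball z r"
      by (intro no_isolated_singularity'[OF _ _ open_ball, of "{z}"]) (use lim in auto)
    then show ?thesis
      unfolding analytic_at using \<open>r > 0\<close> by (intro exI[of _ "ball z r"]) auto
  qed
  then have "q analytic_on UNIV"
    by (intro analytic_on_analytic_at[THEN iffD2]) blast
  then show "q holomorphic_on UNIV"
    by (rule analytic_imp_holomorphic)
qed

lemma zero_free_quotient_same_simple_zeros:
  fixes f G :: "complex \<Rightarrow> complex"
  assumes holf: "f holomorphic_on UNIV" and holG: "G holomorphic_on UNIV"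
    and simple_f: "\<And>z. f z = 0 \<Longrightarrow> deriv f z \<noteq> 0" and simple_G: "\<And>z. G z = 0 \<Longrightarrow> deriv G z \<noteq> 0"
    and same_zeros: "\<And>z. G z = 0 \<longleftrightarrow> f z = 0"
  obtains q where "q holomorphic_on UNIV" and "\<And>z. q z \<noteq> 0" and "\<And>z. G z = f z * q z"
proof -
  obtain q where holq: "q holomorphic_on UNIV" and Gq: "\<And>z. G z = f z * q z"
    using holomorphic_quotient_simple_zeros[OF holf holG simple_f] same_zeros by blast
  have "q z \<noteq> 0" for z
  proof (cases "f z = 0")
    case True
    \<comment> \<open>At a zero of f the product rule gives G' = f' q, and G' \<noteq> 0.\<close>
    have "(G has_field_derivative deriv f z * q z + deriv q z * f z) (at z)"
      unfolding Gq[abs_def]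
      using holomorphic_derivI[OF holf open_UNIV UNIV_I] holomorphic_derivI[OF holq open_UNIV UNIV_I]
      by (rule DERIV_mult)
    then have "deriv G z = deriv f z * q z"
      using True by (simp add: DERIV_imp_deriv)
    then show ?thesis
      using simple_G same_zeros True by auto
  next
    case False
    then show ?thesis
      using Gq[of z] same_zeros[of z] by auto
  qed
  with holq Gq show ?thesis
    using that by blast
qed

lemma min_norm_sqrt_diff_le:
  fixes w w0 :: complex
  shows "min (norm (w - w0)) (norm (w + w0)) ^ 2 \<le> norm (w ^ 2 - w0 ^ 2)"
proof -
  have "min (norm (w - w0)) (norm (w + w0)) ^ 2 \<le> norm (w - w0) * norm (w + w0)"
    by (simp add: power2_eq_square min_def mult_left_mono mult_right_mono)
  also have "\<dots> = norm (w ^ 2 - w0 ^ 2)"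
    by (simp add: norm_mult[symmetric] power2_eq_square algebra_simps)
  finally show ?thesis .
qed

lemma sqrt_selection_tendsto:
  fixes F :: "complex \<Rightarrow> complex"
  assumes "isCont F z0" and "w0 ^ 2 = F z0"
  obtains l where "\<And>z. l z ^ 2 = F z" and "(l \<longlongrightarrow> w0) (at z0)"
proof
  define l where "l z = (let c = csqrt (F z) in if norm (c - w0) \<le> norm (c + w0) then c else - c)" for z
  show "l z ^ 2 = F z" for z
    by (simp add: l_def Let_def)
  have "norm (l z - w0) = min (norm (csqrt (F z) - w0)) (norm (csqrt (F z) + w0))" for z
    by (simp add: l_def Let_def norm_minus_commute[of "- csqrt (F z)"] add.commute)
  then have bound: "norm (l z - w0) \<le> sqrt (norm (F z - F z0))" for z
    using min_norm_sqrt_diff_le[of "csqrt (F z)" w0] assms(2) by (simp add: real_le_rsqrt)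
  have "((\<lambda>z. sqrt (norm (F z - F z0))) \<longlongrightarrow> 0) (at z0)"
    using assms(1) by (auto simp: isCont_def LIM_zero_iff intro!: tendsto_eq_intros)
  then have "((\<lambda>z. l z - w0) \<longlongrightarrow> 0) (at z0)"
    by (rule Lim_null_comparison[OF always_eventually[OF allI[OF bound]]])
  then show "(l \<longlongrightarrow> w0) (at z0)"
    by (rule LIM_zero_cancel)
qed

lemma local_chartI_left_inverse:
  assumes "open V"
    and "(\<lambda>t. fst (\<gamma> t)) holomorphic_on V" "(\<lambda>t. snd (\<gamma> t)) holomorphic_on V"
    and "\<forall>t\<in>V. deriv (\<lambda>s. fst (\<gamma> s)) t \<noteq> 0 \<or> deriv (\<lambda>s. snd (\<gamma> s)) t \<noteq> 0"
    and cont: "continuous_on (\<gamma> ` V) \<pi>" and left_inv: "\<And>t. t \<in> V \<Longrightarrow> \<pi> (\<gamma> t) = t"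
    and "open W" "p \<in> W" "\<gamma> ` V = S \<inter> W"
  shows "local_chart S p V \<gamma>"
proof -
  have inj: "inj_on \<gamma> V"
    by (metis inj_onI left_inv)
  have "continuous_on (\<gamma> ` V) (the_inv_into V \<gamma>)"
    using cont by (rule continuous_on_eq) (auto simp: the_inv_into_f_f[OF inj] left_inv)
  with assms inj show ?thesis
    unfolding local_chart_def by blast
qed

lemma local_chart_image_subset: "local_chart S p V \<gamma> \<Longrightarrow> \<gamma> ` V \<subseteq> S"
  unfolding local_chart_def by auto

lemma local_chart_point_in_image: "local_chart S p V \<gamma> \<Longrightarrow> p \<in> S \<Longrightarrow> p \<in> \<gamma> ` V"
  unfolding local_chart_def by auto

lemma local_holomorphic_sqrt:
  fixes F :: "complex \<Rightarrow> complex"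
  assumes holF: "F holomorphic_on UNIV" and "w0 ^ 2 = F z0" and "w0 \<noteq> 0"
  obtains e s where "e > 0" and "s holomorphic_on ball z0 e" and "s z0 = w0"
    and "\<And>z. z \<in> ball z0 e \<Longrightarrow> F z = s z ^ 2 \<and> s z \<noteq> 0"
proof -
  have "z0 \<in> {z. F z \<noteq> 0}"
    using assms by auto
  moreover have "open {z. F z \<noteq> 0}"
    using holF by (intro open_Collect_neq continuous_intros holomorphic_on_imp_continuous_on) auto
  ultimately obtain e where "e > 0" and "ball z0 e \<subseteq> {z. F z \<noteq> 0}"
    using openE by blast
  then have nonzero: "\<And>z. z \<in> ball z0 e \<Longrightarrow> F z \<noteq> 0"
    by blast
  then obtain s where s: "s holomorphic_on ball z0 e" "\<And>z. z \<in> ball z0 e \<Longrightarrow> F z = s z ^ 2"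
    using contractible_imp_holomorphic_sqrt[of F "ball z0 e"] holomorphic_on_subset[OF holF]
      convex_imp_contractible[OF convex_ball] by blast
  have "s z0 = w0 \<or> - s z0 = w0"
    using s(2)[of z0] \<open>e > 0\<close> assms(2) by (auto simp: power2_eq_iff)
  moreover have "- s holomorphic_on ball z0 e"
    using s(1) by (simp add: fun_Compl_def holomorphic_intros)
  ultimately show ?thesis
    using that[of e s] that[of e "- s"] \<open>e > 0\<close> s nonzero by (auto simp: fun_Compl_def)
qed

lemma local_chart_hsurf_nonzero:
  fixes F :: "complex \<Rightarrow> complex"
  assumes "F holomorphic_on UNIV" and "w0 ^ 2 = F z0" and "w0 \<noteq> 0"
  obtains V \<gamma> where "local_chart (hsurf F) (z0, w0) V \<gamma>"
proof -
  obtain e s where "e > 0" and s: "s holomorphic_on ball z0 e" "s z0 = w0"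
    "\<And>z. z \<in> ball z0 e \<Longrightarrow> F z = s z ^ 2 \<and> s z \<noteq> 0"
    using local_holomorphic_sqrt[OF assms] by blast
  define \<gamma> where "\<gamma> = (\<lambda>t. (t, s t))"
  define W where "W = (ball z0 e \<times> UNIV) \<inter> (\<lambda>q. snd q + s (fst q)) -` (- {0})"
  have "continuous_on (ball z0 e \<times> UNIV) (\<lambda>q. s (fst q))"
    by (rule continuous_on_compose2[OF holomorphic_on_imp_continuous_on[OF s(1)] continuous_on_fst])
      auto
  then have "continuous_on (ball z0 e \<times> UNIV) (\<lambda>q. snd q + s (fst q))"
    by (intro continuous_intros)
  then have "open W"
    unfolding W_def by (intro continuous_open_preimage) (auto simp: open_Times)
  \<comment> \<open>Near a point with w0 \<noteq> 0 the surface is the graph of the branch s;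
    W excludes the other branch.\<close>
  have "\<gamma> ` ball z0 e = hsurf F \<inter> W"
  proof (intro equalityI subsetI)
    fix q assume "q \<in> \<gamma> ` ball z0 e"
    then show "q \<in> hsurf F \<inter> W"
      using s(3) by (force simp: \<gamma>_def W_def hsurf_def)
  next
    fix q assume q: "q \<in> hsurf F \<inter> W"
    then obtain z w where "q = (z, w)" "z \<in> ball z0 e" "w ^ 2 = s z ^ 2" "w \<noteq> - s z"
      using s(3) by (force simp: W_def hsurf_def add_eq_0_iff)
    then show "q \<in> \<gamma> ` ball z0 e"
      by (auto simp: \<gamma>_def power2_eq_iff)
  qed
  moreover have "(z0, w0) \<in> W"
    using \<open>e > 0\<close> s(2) \<open>w0 \<noteq> 0\<close> by (auto simp: W_def add_eq_0_iff)
  ultimately have "local_chart (hsurf F) (z0, w0) (ball z0 e) \<gamma>"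
    using \<open>open W\<close> s(1)
    by (intro local_chartI_left_inverse[where \<pi> = fst]) (auto simp: \<gamma>_def intro: continuous_intros)
  then show ?thesis
    using that by blast
qed

lemma local_chart_hsurf_simple_zero:
  fixes F :: "complex \<Rightarrow> complex"
  assumes holF: "F holomorphic_on UNIV" and "F z0 = 0" and "deriv F z0 \<noteq> 0"
  obtains V \<gamma> where "local_chart (hsurf F) (z0, 0) V \<gamma>"
proof -
  obtain r where "r > 0" and inj: "inj_on F (ball z0 r)"
    using has_complex_derivative_locally_injective[OF holF UNIV_I open_UNIV] assms(3) by blast
  have holU: "F holomorphic_on ball z0 r"
    using holomorphic_on_subset[OF holF subset_UNIV] .
  obtain \<phi> where \<phi>: "\<phi> holomorphic_on F ` ball z0 r" "\<And>z. z \<in> ball z0 r \<Longrightarrow> \<phi> (F z) = z"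
    by (rule holomorphic_has_inverse[OF holU open_ball inj]) blast
  \<comment> \<open>At a simple zero, w is a local coordinate: the surface is z = \<phi> (w ^ 2)
    with \<phi> the local inverse of F.\<close>
  define V where "V = (\<lambda>t. t ^ 2) -` (F ` ball z0 r)"
  define \<gamma> where "\<gamma> = (\<lambda>t::complex. (\<phi> (t ^ 2), t))"
  have "open V"
    unfolding V_def using open_mapping_thm3[OF holU open_ball inj]
    by (intro open_vimage continuous_intros)
  have "(\<phi> \<circ> (\<lambda>t. t ^ 2)) holomorphic_on V"
    by (rule holomorphic_on_compose_gen[OF _ \<phi>(1)]) (auto simp: V_def intro: holomorphic_intros)
  then have "(\<lambda>t. fst (\<gamma> t)) holomorphic_on V"
    by (simp add: \<gamma>_def o_def)
  moreover have "\<gamma> ` V = hsurf F \<inter> (ball z0 r \<times> UNIV)"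
  proof (intro equalityI subsetI)
    fix q assume "q \<in> \<gamma> ` V"
    then obtain t u where "q = \<gamma> t" "u \<in> ball z0 r" "t ^ 2 = F u"
      by (auto simp: V_def)
    then show "q \<in> hsurf F \<inter> (ball z0 r \<times> UNIV)"
      using \<phi>(2)[of u] by (simp add: \<gamma>_def hsurf_def)
  next
    fix q assume "q \<in> hsurf F \<inter> (ball z0 r \<times> UNIV)"
    then obtain z w where "q = (z, w)" "z \<in> ball z0 r" "w ^ 2 = F z"
      by (auto simp: hsurf_def)
    then show "q \<in> \<gamma> ` V"
      using \<phi>(2)[of z] by (auto simp: \<gamma>_def V_def intro!: image_eqI[of _ _ w])
  qed
  moreover have "(\<lambda>t. snd (\<gamma> t)) holomorphic_on V" "\<And>t. snd (\<gamma> t) = t"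
    by (simp_all add: \<gamma>_def)
  ultimately have "local_chart (hsurf F) (z0, 0) V \<gamma>"
    using \<open>open V\<close> \<open>r > 0\<close>
    by (intro local_chartI_left_inverse[where \<pi> = snd and W = "ball z0 r \<times> UNIV"])
      (simp_all add: open_Times continuous_on_snd)
  then show ?thesis
    using that by blast
qed

lemma local_chart_hsurf:
  fixes F :: "complex \<Rightarrow> complex"
  assumes "F holomorphic_on UNIV" and "\<And>z. F z = 0 \<Longrightarrow> deriv F z \<noteq> 0" and "p \<in> hsurf F"
  obtains V \<gamma> where "local_chart (hsurf F) p V \<gamma>"
proof -
  obtain z0 w0 where p: "p = (z0, w0)" and "w0 ^ 2 = F z0"
    using assms(3) by (auto simp: hsurf_def)
  show ?thesis
  proof (cases "w0 = 0")
    case True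
    then show ?thesis
      using assms \<open>w0 ^ 2 = F z0\<close> local_chart_hsurf_simple_zero[of F z0] that p by auto
  next
    case False
    then show ?thesis
      using assms \<open>w0 ^ 2 = F z0\<close> local_chart_hsurf_nonzero[of F w0 z0] that p by auto
  qed
qed

lemma holo_map_hsurf_fibrewise:
  fixes F A B :: "complex \<Rightarrow> complex"
  assumes "F holomorphic_on UNIV" and "\<And>z. F z = 0 \<Longrightarrow> deriv F z \<noteq> 0"
    and holA: "A holomorphic_on UNIV" and holB: "B holomorphic_on UNIV"
    and \<Phi>: "\<And>z w. (z, w) \<in> hsurf F \<Longrightarrow> \<Phi> (z, w) = (A z, w * B z)"
  shows "holo_map (hsurf F) \<Phi>"
  unfolding holo_map_def
proof
  fix p assume "p \<in> hsurf F"
  then obtain V \<gamma> where chart: "local_chart (hsurf F) p V \<gamma>"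
    using local_chart_hsurf assms(1,2) by blast
  then have hol: "(\<lambda>t. fst (\<gamma> t)) holomorphic_on V" "(\<lambda>t. snd (\<gamma> t)) holomorphic_on V"
    by (simp_all add: local_chart_def)
  have \<Phi>\<gamma>: "\<Phi> (\<gamma> t) = (A (fst (\<gamma> t)), snd (\<gamma> t) * B (fst (\<gamma> t)))" if "t \<in> V" for t
    using \<Phi>[of "fst (\<gamma> t)" "snd (\<gamma> t)"] local_chart_image_subset[OF chart] that by auto
  have "(\<lambda>t. A (fst (\<gamma> t))) holomorphic_on V" "(\<lambda>t. B (fst (\<gamma> t))) holomorphic_on V"
    using holomorphic_on_compose_gen[OF hol(1) holA] holomorphic_on_compose_gen[OF hol(1) holB]
    by (simp_all add: o_def)
  then have "(\<lambda>t. fst (\<Phi> (\<gamma> t))) holomorphic_on V" "(\<lambda>t. snd (\<Phi> (\<gamma> t))) holomorphic_on V"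
    using hol(2) by (simp_all add: \<Phi>\<gamma> holomorphic_intros cong: holomorphic_cong)
  with chart show "\<exists>V \<gamma>. local_chart (hsurf F) p V \<gamma> \<and>
      (\<lambda>t. fst (\<Phi> (\<gamma> t))) holomorphic_on V \<and> (\<lambda>t. snd (\<Phi> (\<gamma> t))) holomorphic_on V"
    by blast
qed

lemma holo_map_imp_continuous_on:
  assumes "holo_map S \<Phi>"
  shows "continuous_on S \<Phi>"
  unfolding continuous_on_eq_continuous_within
proof
  fix p assume "p \<in> S"
  then obtain V \<gamma> where chart: "local_chart S p V \<gamma>"
    and hol: "(\<lambda>t. fst (\<Phi> (\<gamma> t))) holomorphic_on V" "(\<lambda>t. snd (\<Phi> (\<gamma> t))) holomorphic_on V"
    using assms unfolding holo_map_def by blast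
  then obtain W where "open W" "p \<in> W" and W: "\<gamma> ` V = S \<inter> W"
    and inj: "inj_on \<gamma> V" and cont_inv: "continuous_on (\<gamma> ` V) (the_inv_into V \<gamma>)"
    unfolding local_chart_def by blast
  have "continuous_on V (\<lambda>t. \<Phi> (\<gamma> t))"
    using continuous_on_Pair[OF hol[THEN holomorphic_on_imp_continuous_on]] by simp
  then have "continuous_on (\<gamma> ` V) (\<lambda>q. \<Phi> (\<gamma> (the_inv_into V \<gamma> q)))"
    by (rule continuous_on_compose2[OF _ cont_inv]) (auto simp: the_inv_into_f_f[OF inj])
  then have "continuous_on (S \<inter> W) \<Phi>"
    unfolding W[symmetric] by (rule continuous_on_eq) (simp add: f_the_inv_into_f[OF inj])
  then have "continuous (at p within S \<inter> W) \<Phi>"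
    using \<open>p \<in> S\<close> \<open>p \<in> W\<close> by (simp add: continuous_on_eq_continuous_within)
  moreover have "at p within S \<inter> W = at p within S"
    using \<open>open W\<close> \<open>p \<in> W\<close> by (intro at_within_nhd[of p W]) auto
  ultimately show "continuous (at p within S) \<Phi>"
    by simp
qed

lemma isCont_descended_map:
  fixes F \<psi> :: "complex \<Rightarrow> complex"
  assumes "isCont F z0" and "continuous_on (hsurf F) \<Phi>"
    and descends: "\<And>z w. w ^ 2 = F z \<Longrightarrow> fst (\<Phi> (z, w)) = \<psi> z"
  shows "isCont \<psi> z0"
proof -
  obtain l where l: "\<And>z. l z ^ 2 = F z" and "(l \<longlongrightarrow> csqrt (F z0)) (at z0)"
    using sqrt_selection_tendsto[OF assms(1) power2_csqrt] by blast
  then have "((\<lambda>z. (z, l z)) \<longlongrightarrow> (z0, csqrt (F z0))) (at z0)"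
    by (intro tendsto_Pair tendsto_ident_at)
  then have "((\<lambda>z. \<Phi> (z, l z)) \<longlongrightarrow> \<Phi> (z0, csqrt (F z0))) (at z0)"
    by (rule continuous_on_tendsto_compose[OF assms(2)]) (simp_all add: hsurf_def l)
  then have "((\<lambda>z. fst (\<Phi> (z, l z))) \<longlongrightarrow> fst (\<Phi> (z0, csqrt (F z0)))) (at z0)"
    by (rule tendsto_fst)
  then show ?thesis
    by (simp add: isCont_def descends l)
qed

lemma local_chart_hsurf_fst_deriv_nonzero:
  fixes F :: "complex \<Rightarrow> complex"
  assumes holF: "F holomorphic_on UNIV" and chart: "local_chart (hsurf F) p V \<gamma>"
    and "t0 \<in> V" and "snd (\<gamma> t0) \<noteq> 0"
  shows "deriv (\<lambda>t. fst (\<gamma> t)) t0 \<noteq> 0"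
proof
  define a where "a = (\<lambda>t. fst (\<gamma> t))"
  define b where "b = (\<lambda>t. snd (\<gamma> t))"
  assume "deriv (\<lambda>t. fst (\<gamma> t)) t0 = 0"
  then have a': "deriv a t0 = 0"
    by (simp add: a_def)
  have "open V" and hol: "a holomorphic_on V" "b holomorphic_on V"
    and immersion: "deriv a t0 \<noteq> 0 \<or> deriv b t0 \<noteq> 0"
    using chart \<open>t0 \<in> V\<close> unfolding local_chart_def a_def b_def by auto
  have on_surf: "b t ^ 2 = F (a t)" if "t \<in> V" for t
    using local_chart_image_subset[OF chart] that by (auto simp: a_def b_def hsurf_def)
  \<comment> \<open>If a' t0 = 0, differentiating b ^ 2 = F \<circ> a gives 2 b b' = 0 at t0,
    so b' t0 = 0 as well.\<close>
  have "((\<lambda>t. b t ^ 2) has_field_derivative 2 * b t0 * deriv b t0) (at t0)"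
    using holomorphic_derivI[OF hol(2) \<open>open V\<close> \<open>t0 \<in> V\<close>]
    by (auto intro!: derivative_eq_intros)
  moreover have "((\<lambda>t. b t ^ 2) has_field_derivative deriv F (a t0) * deriv a t0) (at t0)"
  proof (rule has_field_derivative_transform_within_open[OF _ \<open>open V\<close> \<open>t0 \<in> V\<close>])
    show "((\<lambda>t. F (a t)) has_field_derivative deriv F (a t0) * deriv a t0) (at t0)"
      using holomorphic_derivI[OF holF open_UNIV UNIV_I] holomorphic_derivI[OF hol(1) \<open>open V\<close> \<open>t0 \<in> V\<close>]
      by (rule DERIV_chain2)
  qed (simp add: on_surf)
  ultimately have "2 * b t0 * deriv b t0 = 0"
    using a' DERIV_unique by fastforce
  then show False
    using a' immersion \<open>snd (\<gamma> t0) \<noteq> 0\<close> by (simp add: b_def)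
qed

lemma analytic_at_descended_map_off_zeros:
  fixes F \<psi> :: "complex \<Rightarrow> complex"
  assumes holF: "F holomorphic_on UNIV" and "holo_map (hsurf F) \<Phi>"
    and descends: "\<And>z w. w ^ 2 = F z \<Longrightarrow> fst (\<Phi> (z, w)) = \<psi> z"
    and "F z0 \<noteq> 0"
  shows "\<psi> analytic_on {z0}"
proof -
  define p where "p = (z0, csqrt (F z0))"
  have "p \<in> hsurf F"
    by (simp add: p_def hsurf_def)
  then obtain V \<gamma> where chart: "local_chart (hsurf F) p V \<gamma>"
    and hol\<Phi>: "(\<lambda>t. fst (\<Phi> (\<gamma> t))) holomorphic_on V"
    using assms(2) unfolding holo_map_def by blast
  define a where "a = (\<lambda>t. fst (\<gamma> t))"
  have "open V" and hola: "a holomorphic_on V"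
    using chart unfolding local_chart_def a_def by auto
  obtain t0 where "t0 \<in> V" and "\<gamma> t0 = p"
    using local_chart_point_in_image[OF chart \<open>p \<in> hsurf F\<close>] by blast
  then have "a t0 = z0" and "deriv a t0 \<noteq> 0"
    using local_chart_hsurf_fst_deriv_nonzero[OF holF chart \<open>t0 \<in> V\<close>] \<open>F z0 \<noteq> 0\<close>
    by (simp_all add: a_def p_def)
  then obtain r where "r > 0" and "ball t0 r \<subseteq> V" and inj: "inj_on a (ball t0 r)"
    using has_complex_derivative_locally_injective[OF hola \<open>t0 \<in> V\<close> \<open>open V\<close>] by blast
  then have holB: "a holomorphic_on ball t0 r"
    using hola holomorphic_on_subset by blast
  obtain ai where ai: "ai holomorphic_on a ` ball t0 r" "\<And>t. t \<in> ball t0 r \<Longrightarrow> ai (a t) = t"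
    by (rule holomorphic_has_inverse[OF holB open_ball inj]) blast
  \<comment> \<open>Near z0 the chart is a graph over the z-axis, so \<psi> = (fst \<circ> \<Phi> \<circ> \<gamma>) \<circ> a\<inverse>.\<close>
  have "((\<lambda>t. fst (\<Phi> (\<gamma> t))) \<circ> ai) holomorphic_on a ` ball t0 r"
    using \<open>ball t0 r \<subseteq> V\<close> ai by (intro holomorphic_on_compose_gen[OF ai(1) hol\<Phi>]) auto
  moreover have "((\<lambda>t. fst (\<Phi> (\<gamma> t))) \<circ> ai) y = \<psi> y" if y: "y \<in> a ` ball t0 r" for y
  proof -
    obtain t where "t \<in> ball t0 r" "y = a t"
      using y by blast
    moreover have "snd (\<gamma> t) ^ 2 = F (a t)"
      using local_chart_image_subset[OF chart] \<open>ball t0 r \<subseteq> V\<close> \<open>t \<in> ball t0 r\<close>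
      by (force simp: a_def hsurf_def)
    ultimately show ?thesis
      using descends[of "snd (\<gamma> t)" "a t"] ai(2) by (simp add: a_def)
  qed
  ultimately have "\<psi> holomorphic_on a ` ball t0 r"
    by (rule holomorphic_transform)
  moreover have "open (a ` ball t0 r)" "z0 \<in> a ` ball t0 r"
    using open_mapping_thm3[OF holB open_ball inj] \<open>r > 0\<close> \<open>a t0 = z0\<close> by auto
  ultimately show ?thesis
    using analytic_at by blast
qed

lemma holomorphic_descended_map:
  fixes F \<psi> :: "complex \<Rightarrow> complex"
  assumes holF: "F holomorphic_on UNIV" and simple: "\<And>z. F z = 0 \<Longrightarrow> deriv F z \<noteq> 0"
    and hol\<Phi>: "holo_map (hsurf F) \<Phi>"
    and descends: "\<And>z w. w ^ 2 = F z \<Longrightarrow> fst (\<Phi> (z, w)) = \<psi> z"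
  shows "\<psi> holomorphic_on UNIV"
proof -
  have "\<psi> analytic_on {z0}" for z0
  proof (cases "F z0 = 0")
    case True
    \<comment> \<open>Zeros of F are isolated and \<psi> is continuous, so they are removable singularities.\<close>
    then obtain r where "r > 0" and nonzero: "\<And>y. y \<in> ball z0 r \<Longrightarrow> y \<noteq> z0 \<Longrightarrow> F y \<noteq> 0"
      using simple_zero_isolated[OF holF True simple[OF True]] by blast
    have "isCont F z" for z
      using holomorphic_on_imp_differentiable_at[OF holF open_UNIV UNIV_I]
      by (rule field_differentiable_imp_continuous_at)
    then have cont: "continuous_on (ball z0 r) \<psi>"
      using isCont_descended_map[OF _ holo_map_imp_continuous_on[OF hol\<Phi>] descends]
      by (intro continuous_at_imp_continuous_on) blast
    have "\<psi> analytic_on ball z0 r - {z0}"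
      using analytic_at_descended_map_off_zeros[OF holF hol\<Phi> descends] nonzero
      by (intro analytic_on_analytic_at[THEN iffD2]) blast
    then have "\<psi> holomorphic_on ball z0 r"
      by (intro no_isolated_singularity[OF cont _ open_ball, of "{z0}"] analytic_imp_holomorphic) auto
    then show ?thesis
      unfolding analytic_at using \<open>r > 0\<close> by (intro exI[of _ "ball z0 r"]) auto
  qed (rule analytic_at_descended_map_off_zeros[OF holF hol\<Phi> descends])
  then have "\<psi> analytic_on UNIV"
    by (intro analytic_on_analytic_at[THEN iffD2]) blast
  then show ?thesis
    by (rule analytic_imp_holomorphic)
qed

definition deck_equivariant
    :: "(complex \<Rightarrow> complex) \<Rightarrow> (complex \<times> complex \<Rightarrow> complex \<times> complex) \<Rightarrow> bool" where
  "deck_equivariant f \<Phi> \<longleftrightarrow>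
     (\<forall>z w. (z, w) \<in> hsurf f \<longrightarrow> \<Phi> (z, - w) = (fst (\<Phi> (z, w)), - snd (\<Phi> (z, w))))"

lemma deck_equivariantD:
  "deck_equivariant f \<Phi> \<Longrightarrow> (z, w) \<in> hsurf f \<Longrightarrow> \<Phi> (z, - w) = (fst (\<Phi> (z, w)), - snd (\<Phi> (z, w)))"
  unfolding deck_equivariant_def by blast

lemma conj_deck_group_eq_iff_deck_equivariant:
  fixes f g :: "complex \<Rightarrow> complex"
  assumes bij: "bij_betw \<Phi> (hsurf f) (hsurf g)" and "g \<noteq> (\<lambda>_. 0)"
  shows "{restrict (\<Phi> \<circ> h \<circ> the_inv_into (hsurf f) \<Phi>) (hsurf g) | h. h \<in> deck_group f} = deck_group g
    \<longleftrightarrow> deck_equivariant f \<Phi>"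
proof -
  define \<sigma> :: "complex \<times> complex \<Rightarrow> complex \<times> complex" where "\<sigma> = (\<lambda>(z, w). (z, - w))"
  define \<Psi> where "\<Psi> = the_inv_into (hsurf f) \<Phi>"
  have \<Psi>: "\<Psi> p \<in> hsurf f" "\<Phi> (\<Psi> p) = p" if "p \<in> hsurf g" for p
    using bij that unfolding \<Psi>_def
    by (auto intro: the_inv_into_into[OF bij_betw_imp_inj_on] f_the_inv_into_f_bij_betw
      simp: bij_betw_def)
  have \<Phi>: "\<Phi> q \<in> hsurf g" "\<Psi> (\<Phi> q) = q" if "q \<in> hsurf f" for q
    using bij that unfolding \<Psi>_def
    by (auto intro: bij_betw_apply the_inv_into_f_f[OF bij_betw_imp_inj_on])
  have conj_id: "restrict (\<Phi> \<circ> restrict id (hsurf f) \<circ> \<Psi>) (hsurf g) = restrict id (hsurf g)"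
    using \<Psi> by (auto simp: fun_eq_iff)
  \<comment> \<open>As g is not identically zero, the interchange of S(g) is not the identity, so
    conjugation must carry the interchange of S(f) to it.\<close>
  obtain x0 where "g x0 \<noteq> 0"
    using \<open>g \<noteq> (\<lambda>_. 0)\<close> by auto
  then have "(x0, csqrt (g x0)) \<in> hsurf g" and "csqrt (g x0) \<noteq> 0"
    by (simp_all add: hsurf_def)
  then have "restrict \<sigma> (hsurf g) (x0, csqrt (g x0)) \<noteq> restrict id (hsurf g) (x0, csqrt (g x0))"
    by (simp add: \<sigma>_def)
  then have "restrict \<sigma> (hsurf g) \<noteq> restrict id (hsurf g)"
    by metis
  moreover have "{restrict (\<Phi> \<circ> h \<circ> \<Psi>) (hsurf g) | h. h \<in> deck_group f}
      = {restrict id (hsurf g), restrict (\<Phi> \<circ> restrict \<sigma> (hsurf f) \<circ> \<Psi>) (hsurf g)}"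
    unfolding deck_group_def \<sigma>_def[symmetric] conj_id[symmetric] by blast
  ultimately have "{restrict (\<Phi> \<circ> h \<circ> \<Psi>) (hsurf g) | h. h \<in> deck_group f} = deck_group g
      \<longleftrightarrow> restrict (\<Phi> \<circ> restrict \<sigma> (hsurf f) \<circ> \<Psi>) (hsurf g) = restrict \<sigma> (hsurf g)"
    unfolding deck_group_def \<sigma>_def[symmetric] by (auto simp: doubleton_eq_iff)
  also have "\<dots> \<longleftrightarrow> (\<forall>p \<in> hsurf g. \<Phi> (\<sigma> (\<Psi> p)) = \<sigma> p)"
    using \<Psi> by (auto simp: fun_eq_iff)
  also have "\<dots> \<longleftrightarrow> (\<forall>q \<in> hsurf f. \<Phi> (\<sigma> q) = \<sigma> (\<Phi> q))"
    using \<Psi> \<Phi> by metis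
  also have "\<dots> \<longleftrightarrow> deck_equivariant f \<Phi>"
    by (auto simp: \<sigma>_def deck_equivariant_def split: prod.splits)
  finally show ?thesis
    unfolding \<Psi>_def .
qed

context
  fixes f g :: "complex \<Rightarrow> complex" and \<Phi> :: "complex \<times> complex \<Rightarrow> complex \<times> complex"
  assumes bij: "bij_betw \<Phi> (hsurf f) (hsurf g)"
    and equivariant: "deck_equivariant f \<Phi>"
begin

lemma fst_equivariant_map_eq:
  assumes "w ^ 2 = f z"
  shows "fst (\<Phi> (z, w)) = fst (\<Phi> (z, csqrt (f z)))"
proof -
  have "w ^ 2 = csqrt (f z) ^ 2"
    using assms by simp
  then have "w = csqrt (f z) \<or> w = - csqrt (f z)"
    by (rule power2_eq_iff[THEN iffD1])
  then show ?thesis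
    using deck_equivariantD[OF equivariant, of z "csqrt (f z)"] by (auto simp: hsurf_def)
qed

lemma equivariant_map_fibre_cases:
  assumes "(z, w) \<in> hsurf f" and "q \<in> hsurf g" and "fst q = fst (\<Phi> (z, w))"
  shows "q = \<Phi> (z, w) \<or> q = \<Phi> (z, - w)"
proof -
  have "\<Phi> (z, w) \<in> hsurf g"
    using bij assms(1) by (rule bij_betw_apply)
  then have "snd q ^ 2 = snd (\<Phi> (z, w)) ^ 2"
    using assms(2,3) by (auto simp: hsurf_def split: prod.splits)
  then have "snd q = snd (\<Phi> (z, w)) \<or> snd q = - snd (\<Phi> (z, w))"
    by (simp add: power2_eq_iff)
  then show ?thesis
    using deck_equivariantD[OF equivariant assms(1)] assms(3) by (auto simp: prod_eq_iff)
qed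

lemma bij_descended_map: "bij (\<lambda>z. fst (\<Phi> (z, csqrt (f z))))"
proof (rule bijI)
  have on_f: "(z, csqrt (f z)) \<in> hsurf f" "(z, - csqrt (f z)) \<in> hsurf f" for z
    by (simp_all add: hsurf_def)
  show "inj (\<lambda>z. fst (\<Phi> (z, csqrt (f z))))"
  proof (rule injI)
    fix z1 z2
    assume "fst (\<Phi> (z1, csqrt (f z1))) = fst (\<Phi> (z2, csqrt (f z2)))"
    then have "\<Phi> (z2, csqrt (f z2)) = \<Phi> (z1, csqrt (f z1)) \<or>
        \<Phi> (z2, csqrt (f z2)) = \<Phi> (z1, - csqrt (f z1))"
      using equivariant_map_fibre_cases[OF on_f(1) bij_betw_apply[OF bij on_f(1)]] by simp
    then show "z1 = z2"
      by (auto simp: inj_on_eq_iff[OF bij_betw_imp_inj_on[OF bij]] on_f)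
  qed
  have "y \<in> range (\<lambda>z. fst (\<Phi> (z, csqrt (f z))))" for y
  proof -
    have "(y, csqrt (g y)) \<in> \<Phi> ` hsurf f"
      using bij_betw_imp_surj_on[OF bij] by (simp add: hsurf_def)
    then obtain z w where "w ^ 2 = f z" and "\<Phi> (z, w) = (y, csqrt (g y))"
      by (auto simp: hsurf_def)
    then have "fst (\<Phi> (z, csqrt (f z))) = y"
      using fst_equivariant_map_eq[OF \<open>w ^ 2 = f z\<close>] by simp
    then show ?thesis
      by blast
  qed
  then show "surj (\<lambda>z. fst (\<Phi> (z, csqrt (f z))))"
    by blast
qed

lemma descended_map_zero_iff: "g (fst (\<Phi> (z, csqrt (f z)))) = 0 \<longleftrightarrow> f z = 0"
proof -
  define c where "c = csqrt (f z)"
  obtain y v where yv: "\<Phi> (z, c) = (y, v)"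
    by fastforce
  have on_f: "(z, c) \<in> hsurf f" "(z, - c) \<in> hsurf f"
    by (simp_all add: c_def hsurf_def)
  then have "v ^ 2 = g y"
    using bij_betw_apply[OF bij on_f(1)] by (simp add: yv hsurf_def)
  \<comment> \<open>The branch points are exactly the fixed points of the sheet interchange,
    which \<Phi> respects.\<close>
  then have "g y = 0 \<longleftrightarrow> \<Phi> (z, - c) = \<Phi> (z, c)"
    using deck_equivariantD[OF equivariant on_f(1)] by (auto simp: yv)
  also have "\<dots> \<longleftrightarrow> c = 0"
    using inj_on_eq_iff[OF bij_betw_imp_inj_on[OF bij] on_f(2,1)] by simp
  also have "\<dots> \<longleftrightarrow> f z = 0"
    by (simp add: c_def)
  finally show ?thesis
    using yv unfolding c_def by simp
qed

end

lemma biholo_equiv_imp_automorphism: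
  fixes f g :: "complex \<Rightarrow> complex"
  assumes holf: "f holomorphic_on UNIV" and simple: "\<And>z. f z = 0 \<Longrightarrow> deriv f z \<noteq> 0"
    and "g \<noteq> (\<lambda>_. 0)" and "biholo_equiv_pairs f g"
  shows "\<exists>h. h holomorphic_on UNIV \<and> bij h \<and> inv h holomorphic_on UNIV \<and>
    h ` {x. f x = 0} = {x. g x = 0}"
proof -
  obtain \<Phi> where bij: "bij_betw \<Phi> (hsurf f) (hsurf g)" and hol\<Phi>: "holo_map (hsurf f) \<Phi>"
    and conj: "{restrict (\<Phi> \<circ> h \<circ> the_inv_into (hsurf f) \<Phi>) (hsurf g) | h. h \<in> deck_group f}
      = deck_group g"
    using assms(4) unfolding biholo_equiv_pairs_def biholomorphism_def by blast
  have equivariant: "deck_equivariant f \<Phi>"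
    using conj_deck_group_eq_iff_deck_equivariant[OF bij \<open>g \<noteq> (\<lambda>_. 0)\<close>] conj by blast
  define \<psi> where "\<psi> z = fst (\<Phi> (z, csqrt (f z)))" for z
  have descends: "fst (\<Phi> (z, w)) = \<psi> z" if "w ^ 2 = f z" for z w
    using fst_equivariant_map_eq[OF bij equivariant that] by (simp add: \<psi>_def)
  have "bij \<psi>"
    using bij_descended_map[OF bij equivariant] by (simp add: \<psi>_def[abs_def])
  moreover have "\<psi> holomorphic_on UNIV"
    using holomorphic_descended_map[OF holf simple hol\<Phi> descends] .
  moreover have "\<psi> ` {x. f x = 0} = {x. g x = 0}"
  proof -
    have "{x. f x = 0} = \<psi> -` {y. g y = 0}"
      using descended_map_zero_iff[OF bij equivariant] by (simp add: \<psi>_def)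
    then show ?thesis
      using surj_image_vimage_eq[OF bij_is_surj[OF \<open>bij \<psi>\<close>]] by (simp only:)
  qed
  ultimately show ?thesis
    using holomorphic_on_inv_of_bij by blast
qed

lemma biholomorphism_hsurf_lift:
  fixes f g h r :: "complex \<Rightarrow> complex"
  assumes holf: "f holomorphic_on UNIV" and simple_f: "\<And>z. f z = 0 \<Longrightarrow> deriv f z \<noteq> 0"
    and holg: "g holomorphic_on UNIV" and simple_g: "\<And>z. g z = 0 \<Longrightarrow> deriv g z \<noteq> 0"
    and holh: "h holomorphic_on UNIV" and "bij h" and hol_inv: "inv h holomorphic_on UNIV"
    and holr: "r holomorphic_on UNIV" and r_nz: "\<And>z. r z \<noteq> 0"
    and eq: "\<And>z. g (h z) = f z * r z ^ 2"
  shows "biholomorphism (hsurf f) (hsurf g) (\<lambda>(z, w). (h z, w * r z))"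
proof -
  define \<Phi> :: "complex \<times> complex \<Rightarrow> complex \<times> complex" where "\<Phi> = (\<lambda>(z, w). (h z, w * r z))"
  define \<Psi> :: "complex \<times> complex \<Rightarrow> complex \<times> complex"
    where "\<Psi> = (\<lambda>(z, w). (inv h z, w / r (inv h z)))"
  have inv_h: "inv h (h z) = z" "h (inv h z) = z" for z
    using \<open>bij h\<close> by (simp_all add: bij_is_inj bij_is_surj surj_f_inv_f)
  have \<Phi>_f: "\<Phi> p \<in> hsurf g" if "p \<in> hsurf f" for p
    using that eq by (auto simp: \<Phi>_def hsurf_def power_mult_distrib)
  have \<Psi>_g: "\<Psi> p \<in> hsurf f" if "p \<in> hsurf g" for p
    using that eq[of "inv h (fst p)"] r_nz
    by (auto simp: \<Psi>_def hsurf_def inv_h power_mult_distrib field_simps)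
  have \<Psi>_\<Phi>: "\<Psi> (\<Phi> p) = p" and \<Phi>_\<Psi>: "\<Phi> (\<Psi> p) = p" for p
    using r_nz by (auto simp: \<Phi>_def \<Psi>_def inv_h split: prod.splits)
  have bij: "bij_betw \<Phi> (hsurf f) (hsurf g)"
    by (rule bij_betw_byWitness[where f' = \<Psi>]) (auto simp: \<Psi>_\<Phi> \<Phi>_\<Psi> intro: \<Phi>_f \<Psi>_g)
  have "the_inv_into (hsurf f) \<Phi> p = \<Psi> p" if "p \<in> hsurf g" for p
    using the_inv_into_f_eq[OF bij_betw_imp_inj_on[OF bij] \<Phi>_\<Psi> \<Psi>_g[OF that]] .
  moreover have "(\<lambda>z. inverse (r (inv h z))) holomorphic_on UNIV"
    using holomorphic_on_compose_gen[OF hol_inv holr] r_nz by (auto intro!: holomorphic_intros simp: o_def)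
  ultimately have "holo_map (hsurf g) (the_inv_into (hsurf f) \<Phi>)"
    by (auto intro!: holo_map_hsurf_fibrewise[OF holg simple_g hol_inv] simp: \<Psi>_def divide_inverse)
  moreover have "holo_map (hsurf f) \<Phi>"
    using holo_map_hsurf_fibrewise[OF holf simple_f holh holr, of \<Phi>] by (simp add: \<Phi>_def)
  ultimately show ?thesis
    using bij by (simp add: biholomorphism_def \<Phi>_def)
qed

lemma automorphism_pullback_sqrt_factor:
  fixes f g h :: "complex \<Rightarrow> complex"
  assumes holf: "f holomorphic_on UNIV" and simple_f: "\<And>z. f z = 0 \<Longrightarrow> deriv f z \<noteq> 0"
    and holg: "g holomorphic_on UNIV" and simple_g: "\<And>z. g z = 0 \<Longrightarrow> deriv g z \<noteq> 0"
    and holh: "h holomorphic_on UNIV" and "bij h" and hol_inv: "inv h holomorphic_on UNIV"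
    and zeros: "h ` {x. f x = 0} = {x. g x = 0}"
  obtains r where "r holomorphic_on UNIV" and "\<And>z. r z \<noteq> 0" and "\<And>z. g (h z) = f z * r z ^ 2"
proof -
  have same_zeros: "g (h z) = 0 \<longleftrightarrow> f z = 0" for z
  proof -
    have "g (h z) = 0 \<longleftrightarrow> h z \<in> h ` {x. f x = 0}"
      using zeros by simp
    also have "\<dots> \<longleftrightarrow> f z = 0"
      using inj_image_mem_iff[OF bij_is_inj[OF \<open>bij h\<close>]] by simp
    finally show ?thesis .
  qed
  have holgh: "(\<lambda>z. g (h z)) holomorphic_on UNIV"
    using holomorphic_on_compose_gen[OF holh holg] by (simp add: o_def)
  have "deriv (\<lambda>z. g (h z)) z \<noteq> 0" if "g (h z) = 0" for z
  proof -
    have "((\<lambda>z. g (h z)) has_field_derivative deriv g (h z) * deriv h z) (at z)"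
      using holomorphic_derivI[OF holg open_UNIV UNIV_I] holomorphic_derivI[OF holh open_UNIV UNIV_I]
      by (rule DERIV_chain2)
    then show ?thesis
      using simple_g[OF that] deriv_nonzero_if_holomorphic_inv[OF holh hol_inv bij_is_inj[OF \<open>bij h\<close>]]
      by (simp add: DERIV_imp_deriv)
  qed
  then obtain q where holq: "q holomorphic_on UNIV" and q_nz: "\<And>z. q z \<noteq> 0"
    and gh: "\<And>z. g (h z) = f z * q z"
    using zero_free_quotient_same_simple_zeros[OF holf holgh simple_f] same_zeros by blast
  obtain r where holr: "r holomorphic_on UNIV" and q: "\<And>z. q z = r z ^ 2"
    by (rule contractible_imp_holomorphic_sqrt[OF holq contractible_UNIV]) (use q_nz in auto)
  moreover have "r z \<noteq> 0" for z
    using q_nz[of z] q[of z] by auto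
  ultimately show ?thesis
    using that gh q by auto
qed

lemma automorphism_imp_biholo_equiv:
  fixes f g h :: "complex \<Rightarrow> complex"
  assumes holf: "f holomorphic_on UNIV" and simple_f: "\<And>z. f z = 0 \<Longrightarrow> deriv f z \<noteq> 0"
    and holg: "g holomorphic_on UNIV" and simple_g: "\<And>z. g z = 0 \<Longrightarrow> deriv g z \<noteq> 0"
    and "g \<noteq> (\<lambda>_. 0)"
    and holh: "h holomorphic_on UNIV" and "bij h" and hol_inv: "inv h holomorphic_on UNIV"
    and zeros: "h ` {x. f x = 0} = {x. g x = 0}"
  shows "biholo_equiv_pairs f g"
proof -
  obtain r where holr: "r holomorphic_on UNIV" and r_nz: "\<And>z. r z \<noteq> 0"
    and eq: "\<And>z. g (h z) = f z * r z ^ 2"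
    using automorphism_pullback_sqrt_factor[OF holf simple_f holg simple_g holh \<open>bij h\<close> hol_inv zeros]
    by blast
  define \<Phi> :: "complex \<times> complex \<Rightarrow> complex \<times> complex" where "\<Phi> = (\<lambda>(z, w). (h z, w * r z))"
  have biholo: "biholomorphism (hsurf f) (hsurf g) \<Phi>"
    unfolding \<Phi>_def
    using biholomorphism_hsurf_lift[OF holf simple_f holg simple_g holh \<open>bij h\<close> hol_inv holr r_nz eq] .
  then have "bij_betw \<Phi> (hsurf f) (hsurf g)"
    by (simp add: biholomorphism_def)
  moreover have "deck_equivariant f \<Phi>"
    by (simp add: \<Phi>_def deck_equivariant_def)
  ultimately have "{restrict (\<Phi> \<circ> k \<circ> the_inv_into (hsurf f) \<Phi>) (hsurf g) | k. k \<in> deck_group f}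
      = deck_group g"
    using conj_deck_group_eq_iff_deck_equivariant[OF _ \<open>g \<noteq> (\<lambda>_. 0)\<close>] by blast
  with biholo show ?thesis
    unfolding biholo_equiv_pairs_def by blast
qed

theorem mainTheorem7:
  fixes z z' :: "nat \<Rightarrow> complex" and f g :: "complex \<Rightarrow> complex"
  assumes "inj z" and "inj z'"
    and "filterlim (\<lambda>k. norm (z k)) at_top sequentially"
    and "filterlim (\<lambda>k. norm (z' k)) at_top sequentially"
    and "f holomorphic_on UNIV" and "g holomorphic_on UNIV"
    and "{x. f x = 0} = range z" and "{x. g x = 0} = range z'"
    and "\<forall>k. deriv f (z k) \<noteq> 0" and "\<forall>k. deriv g (z' k) \<noteq> 0"
  shows "biholo_equiv_pairs f g \<longleftrightarrow>
    (\<exists>h. h holomorphic_on UNIV \<and> bij h \<and> inv h holomorphic_on UNIV \<and>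
         h ` {x. f x = 0} = {x. g x = 0})"
proof -
  have simple_f: "deriv f x \<noteq> 0" if "f x = 0" for x
    using that assms(7,9) by (auto simp: set_eq_iff)
  have simple_g: "deriv g x \<noteq> 0" if "g x = 0" for x
    using that assms(8,10) by (auto simp: set_eq_iff)
  have "g \<noteq> (\<lambda>_. 0)"
    using assms(10) by auto
  show ?thesis
    using biholo_equiv_imp_automorphism[OF assms(5) simple_f \<open>g \<noteq> (\<lambda>_. 0)\<close>]
      automorphism_imp_biholo_equiv[OF assms(5) simple_f assms(6) simple_g \<open>g \<noteq> (\<lambda>_. 0)\<close>]
    by blast
qed

end
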